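(* Let $\mathcal O$ be a complete discrete valuation ring of characteristic zero with residue field of characteristic $p>0$. Let $\Lambda$ be an $\mathcal O$-order, $G$ a finite group and $\Gamma$ an $\mathcal O$-linear crossed product of $\Lambda$ and $G$. If $e\in\Lambda$ is an idempotent such that $e\Lambda\cong\alpha(e)\Lambda$ as right $\Lambda$-modules for every $\alpha\in\operatorname{Aut}_{\mathcal O}(\Lambda)$, then $e\Gamma e$ is an $\mathcal O$-linear crossed product of $e\Lambda e$ and $G$.
   Context: An $\mathcal O$-order is an $\mathcal O$-algebra free and finitely generated as an $\mathcal O$-module. A crossed product of a ring $R$ and $G$ is a $G$-graded ring $A=\bigoplus_{g\in G}A_g$ with $A_1=R$ such that each $A_g$ contains a unit of $A$; it is $\mathcal O$-linear if $R$ is an $\mathcal O$-algebra and the image of $\mathcal O$ under $R\hookrightarrow A$ lies in the centre of $A$. Here $e\Gamma e$ is graded by $(e\Gamma e)_g=e\Gamma_g e$. *)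

theory Defs
  imports "HOL-Algebra.Algebra"
begin

definition DVR :: "('o, 'p) ring_scheme \<Rightarrow> bool" where
  "DVR \<O> \<longleftrightarrow> principal_domain \<O> \<and> (\<exists>!P. primeideal P \<O> \<and> P \<noteq> {\<zero>\<^bsub>\<O>\<^esub>})"

definition dvr_max_ideal :: "('o, 'p) ring_scheme \<Rightarrow> 'o set" where
  "dvr_max_ideal \<O> = (THE P. primeideal P \<O> \<and> P \<noteq> {\<zero>\<^bsub>\<O>\<^esub>})"

definition ideal_power :: "('o, 'p) ring_scheme \<Rightarrow> 'o set \<Rightarrow> nat \<Rightarrow> 'o set" where
  "ideal_power \<O> I n = ((ideal_prod \<O> I) ^^ n) (carrier \<O>)"

definition adically_complete :: "('o, 'p) ring_scheme \<Rightarrow> 'o set \<Rightarrow> bool" where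
  "adically_complete \<O> m \<longleftrightarrow>
     (\<forall>x::nat \<Rightarrow> 'o. range x \<subseteq> carrier \<O> \<longrightarrow>
        (\<forall>n. \<exists>N. \<forall>i\<ge>N. \<forall>j\<ge>N. x i \<ominus>\<^bsub>\<O>\<^esub> x j \<in> ideal_power \<O> m n) \<longrightarrow>
        (\<exists>y\<in>carrier \<O>. \<forall>n. \<exists>N. \<forall>i\<ge>N. x i \<ominus>\<^bsub>\<O>\<^esub> y \<in> ideal_power \<O> m n))"

definition complete_DVR :: "('o, 'p) ring_scheme \<Rightarrow> bool" where
  "complete_DVR \<O> \<longleftrightarrow> DVR \<O> \<and> adically_complete \<O> (dvr_max_ideal \<O>)"

definition char_zero_ring :: "('o, 'p) ring_scheme \<Rightarrow> bool" where
  "char_zero_ring \<O> \<longleftrightarrow> (\<forall>n::nat. n > 0 \<longrightarrow> add_pow \<O> n \<one>\<^bsub>\<O>\<^esub> \<noteq> \<zero>\<^bsub>\<O>\<^esub>)"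

definition residue_char :: "('o, 'p) ring_scheme \<Rightarrow> nat \<Rightarrow> bool" where
  "residue_char \<O> p \<longleftrightarrow> Factorial_Ring.prime p \<and> add_pow \<O> p \<one>\<^bsub>\<O>\<^esub> \<in> dvr_max_ideal \<O>"

definition algebra_over :: "('o, 'p) ring_scheme \<Rightarrow> ('a, 'm) ring_scheme \<Rightarrow> ('o \<Rightarrow> 'a) \<Rightarrow> bool" where
  "algebra_over \<O> L \<phi> \<longleftrightarrow> ring L \<and> \<phi> \<in> ring_hom \<O> L \<and>
     (\<forall>c\<in>carrier \<O>. \<forall>x\<in>carrier L. \<phi> c \<otimes>\<^bsub>L\<^esub> x = x \<otimes>\<^bsub>L\<^esub> \<phi> c)"

definition O_order :: "('o, 'p) ring_scheme \<Rightarrow> ('a, 'm) ring_scheme \<Rightarrow> ('o \<Rightarrow> 'a) \<Rightarrow> bool" where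
  "O_order \<O> L \<phi> \<longleftrightarrow> algebra_over \<O> L \<phi> \<and>
     (\<exists>(n::nat) b. b \<in> {..<n} \<rightarrow> carrier L \<and>
        (\<forall>x\<in>carrier L. \<exists>!c. c \<in> {..<n} \<rightarrow>\<^sub>E carrier \<O> \<and>
             x = finsum L (\<lambda>i. \<phi> (c i) \<otimes>\<^bsub>L\<^esub> b i) {..<n}))"

definition group_graded :: "('a, 'm) ring_scheme \<Rightarrow> ('g, 'n) monoid_scheme \<Rightarrow> ('g \<Rightarrow> 'a set) \<Rightarrow> bool" where
  "group_graded A G Gr \<longleftrightarrow> ring A \<and> group G \<and>
     (\<forall>g\<in>carrier G. additive_subgroup (Gr g) A) \<and>
     (\<forall>g\<in>carrier G. \<forall>h\<in>carrier G. \<forall>x\<in>Gr g. \<forall>y\<in>Gr h. x \<otimes>\<^bsub>A\<^esub> y \<in> Gr (g \<otimes>\<^bsub>G\<^esub> h)) \<and>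
     (\<forall>x\<in>carrier A. \<exists>!f. f \<in> (\<Pi>\<^sub>E g\<in>carrier G. Gr g) \<and>
          finite {g\<in>carrier G. f g \<noteq> \<zero>\<^bsub>A\<^esub>} \<and>
          x = finsum A f {g\<in>carrier G. f g \<noteq> \<zero>\<^bsub>A\<^esub>})"

definition crossed_product :: "('a, 'm) ring_scheme \<Rightarrow> ('a, 'm) ring_scheme \<Rightarrow>
    ('g, 'n) monoid_scheme \<Rightarrow> ('g \<Rightarrow> 'a set) \<Rightarrow> bool" where
  "crossed_product A R G Gr \<longleftrightarrow> group_graded A G Gr \<and>
     R = A\<lparr>carrier := Gr \<one>\<^bsub>G\<^esub>\<rparr> \<and>
     (\<forall>g\<in>carrier G. Gr g \<inter> Units A \<noteq> {})"

definition linear_crossed_product :: "('o, 'p) ring_scheme \<Rightarrow> ('o \<Rightarrow> 'a) \<Rightarrow>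
    ('a, 'm) ring_scheme \<Rightarrow> ('a, 'm) ring_scheme \<Rightarrow>
    ('g, 'n) monoid_scheme \<Rightarrow> ('g \<Rightarrow> 'a set) \<Rightarrow> bool" where
  "linear_crossed_product \<O> \<phi> A R G Gr \<longleftrightarrow> crossed_product A R G Gr \<and>
     algebra_over \<O> R \<phi> \<and>
     (\<forall>c\<in>carrier \<O>. \<forall>x\<in>carrier A. \<phi> c \<otimes>\<^bsub>A\<^esub> x = x \<otimes>\<^bsub>A\<^esub> \<phi> c)"

definition O_automorphisms :: "('o, 'p) ring_scheme \<Rightarrow> ('a, 'm) ring_scheme \<Rightarrow> ('o \<Rightarrow> 'a) \<Rightarrow> ('a \<Rightarrow> 'a) set" where
  "O_automorphisms \<O> L \<phi> = {\<alpha>. \<alpha> \<in> ring_iso L L \<and>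
     (\<forall>c\<in>carrier \<O>. \<forall>x\<in>carrier L. \<alpha> (\<phi> c \<otimes>\<^bsub>L\<^esub> x) = \<phi> c \<otimes>\<^bsub>L\<^esub> \<alpha> x)}"

definition right_ideal_gen :: "('a, 'm) ring_scheme \<Rightarrow> 'a \<Rightarrow> 'a set" where
  "right_ideal_gen L a = (\<lambda>x. a \<otimes>\<^bsub>L\<^esub> x) ` carrier L"

definition right_module_iso :: "('a, 'm) ring_scheme \<Rightarrow> 'a set \<Rightarrow> 'a set \<Rightarrow> bool" where
  "right_module_iso L M N \<longleftrightarrow> (\<exists>f. bij_betw f M N \<and>
     (\<forall>x\<in>M. \<forall>y\<in>M. f (x \<oplus>\<^bsub>L\<^esub> y) = f x \<oplus>\<^bsub>L\<^esub> f y) \<and>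
     (\<forall>x\<in>M. \<forall>r\<in>carrier L. f (x \<otimes>\<^bsub>L\<^esub> r) = f x \<otimes>\<^bsub>L\<^esub> r))"

definition corner :: "('a, 'm) ring_scheme \<Rightarrow> 'a \<Rightarrow> ('a, 'm) ring_scheme" where
  "corner A e = A\<lparr>carrier := (\<lambda>x. e \<otimes>\<^bsub>A\<^esub> x \<otimes>\<^bsub>A\<^esub> e) ` carrier A, one := e\<rparr>"

end

(*
  Let u be a unit of Gamma lying in Gamma_g. Its inverse is homogeneous of degree g^-1, so
  conjugation by u is an O-automorphism alpha of Lambda = Gamma_1, and the hypothesis gives
  an isomorphism e Lambda ~ alpha(e) Lambda. For idempotents e, f such an isomorphism amounts
  to elements a in f Lambda e and b in e Lambda f with b a = e and a b = f. With f = u e u^-1,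
  the element b u lies in e Gamma_g e and is a unit of e Gamma e with inverse u^-1 a.
  The grading of e Gamma e is obtained by applying x |-> e x e to homogeneous decompositions
  in Gamma.
*)
theory Submission
  imports Defs
begin

lemma corner_simps [simp]:
  "monoid.mult (corner R e) = monoid.mult R"
  "monoid.one (corner R e) = e"
  "ring.zero (corner R e) = ring.zero R"
  "ring.add (corner R e) = ring.add R"
  by (simp_all add: corner_def)

context ring
begin

lemma carrier_corner:
  assumes "e \<in> carrier R" "e \<otimes> e = e"
  shows "carrier (corner R e) = {x \<in> carrier R. e \<otimes> x = x \<and> x \<otimes> e = x}"
proof (intro equalityI subsetI)
  fix x assume "x \<in> carrier (corner R e)"
  then obtain y where "y \<in> carrier R" "x = e \<otimes> y \<otimes> e" by (auto simp: corner_def)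
  with assms show "x \<in> {x \<in> carrier R. e \<otimes> x = x \<and> x \<otimes> e = x}"
    by (simp add: m_assoc flip: m_assoc[of e e])
next
  fix x assume "x \<in> {x \<in> carrier R. e \<otimes> x = x \<and> x \<otimes> e = x}"
  then show "x \<in> carrier (corner R e)" by (auto simp: corner_def intro!: image_eqI[where x = x])
qed

lemma ring_corner:
  assumes e: "e \<in> carrier R" "e \<otimes> e = e"
  shows "ring (corner R e)"
proof (rule ringI)
  show "abelian_group (corner R e)"
  proof (rule abelian_groupI)
    fix x assume x: "x \<in> carrier (corner R e)"
    show "\<exists>y\<in>carrier (corner R e). y \<oplus>\<^bsub>corner R e\<^esub> x = \<zero>\<^bsub>corner R e\<^esub>"
      using x e by (intro bexI[of _ "\<ominus> x"]) (simp_all add: carrier_corner l_neg l_minus r_minus)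
  qed (use e in \<open>auto simp: carrier_corner l_distr r_distr a_ac\<close>)
  show "monoid (corner R e)"
    by (rule monoidI) (use e in \<open>auto simp: carrier_corner m_assoc simp flip: m_assoc[of e]\<close>)
qed (use e in \<open>auto simp: carrier_corner l_distr r_distr\<close>)

lemma finsum_corner:
  assumes e: "e \<in> carrier R" "e \<otimes> e = e" and f: "f \<in> I \<rightarrow> carrier (corner R e)"
  shows "finsum (corner R e) f I = finsum R f I"
proof -
  interpret C: ring "corner R e" using ring_corner[OF e] .
  show ?thesis
    using f
  proof (induction I rule: infinite_finite_induct)
    case (infinite I)
    then show ?case by (simp add: finsum_def finprod_def)
  next
    case empty
    then show ?case by simp
  next
    case (insert i I)
    have "f \<in> insert i I \<rightarrow> carrier R" using insert(4) e by (auto simp: carrier_corner)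
    then show ?case using insert by simp
  qed
qed

lemma a_inv_corner:
  assumes e: "e \<in> carrier R" "e \<otimes> e = e" and x: "x \<in> carrier (corner R e)"
  shows "\<ominus>\<^bsub>corner R e\<^esub> x = \<ominus> x"
proof -
  interpret C: ring "corner R e" using ring_corner[OF e] .
  show ?thesis
    using e x by (intro C.minus_equality) (simp_all add: carrier_corner l_neg l_minus r_minus)
qed

lemma corner_central:
  assumes e: "e \<in> carrier R" "e \<otimes> e = e"
    and z: "z \<in> carrier R" "\<And>y. y \<in> carrier R \<Longrightarrow> z \<otimes> y = y \<otimes> z"
    and x: "x \<in> carrier (corner R e)"
  shows "z \<otimes> e \<otimes> x = x \<otimes> (z \<otimes> e)"
proof -
  have xR: "x \<in> carrier R" "e \<otimes> x = x" "x \<otimes> e = x" using x e by (simp_all add: carrier_corner)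
  have "z \<otimes> e \<otimes> x = z \<otimes> x" using xR z(1) e by (simp add: m_assoc)
  also have "\<dots> = x \<otimes> z" using xR z by simp
  also have "\<dots> = x \<otimes> (e \<otimes> z)" using xR z e by (simp add: m_assoc[symmetric])
  also have "\<dots> = x \<otimes> (z \<otimes> e)" using z(2)[OF e(1)] by simp
  finally show ?thesis .
qed

lemma corner_Units_of_conjugate_idempotent:
  assumes e: "e \<in> carrier R" "e \<otimes> e = e" and u: "u \<in> Units R" and f: "f = u \<otimes> e \<otimes> inv u"
    and ab: "a \<in> carrier R" "b \<in> carrier R" "a \<otimes> e = a" "f \<otimes> a = a"
      "e \<otimes> b = b" "b \<otimes> f = b" "b \<otimes> a = e" "a \<otimes> b = f"
  shows "b \<otimes> u \<in> Units (corner R e)"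
proof -
  have uc: "u \<in> carrier R" "inv u \<in> carrier R" using u by (simp_all add: Units_closed)
  have fu: "f \<otimes> u = u \<otimes> e" using f u uc e by (simp add: m_assoc)
  have uf: "inv u \<otimes> f = e \<otimes> inv u" using f u uc e by (simp add: m_assoc[symmetric])
  have fc: "f \<in> carrier R" using f uc e by simp
  have "b \<otimes> u \<otimes> e = b \<otimes> (f \<otimes> u)" using ab uc e by (simp add: m_assoc fu)
  also have "\<dots> = b \<otimes> u" using ab uc fc by (simp add: m_assoc[symmetric])
  finally have x: "b \<otimes> u \<in> carrier (corner R e)"
    using ab uc e by (simp add: carrier_corner m_assoc[symmetric])
  have "e \<otimes> (inv u \<otimes> a) = inv u \<otimes> f \<otimes> a" using ab uc e by (simp add: m_assoc[symmetric] uf)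
  also have "\<dots> = inv u \<otimes> a" using ab uc fc by (simp add: m_assoc)
  finally have y: "inv u \<otimes> a \<in> carrier (corner R e)"
    using ab uc e by (simp add: carrier_corner m_assoc)
  have "u \<otimes> (inv u \<otimes> a) = a" using ab u uc by (simp add: m_assoc[symmetric])
  then have "b \<otimes> u \<otimes> (inv u \<otimes> a) = b \<otimes> a" using ab uc by (simp add: m_assoc)
  moreover have "inv u \<otimes> a \<otimes> (b \<otimes> u) = inv u \<otimes> (a \<otimes> b) \<otimes> u"
    using ab(1,2) uc by (simp add: m_assoc)
  moreover have "inv u \<otimes> f \<otimes> u = e" using uf u uc e by (simp add: m_assoc)
  ultimately show ?thesis using x y ab(7,8) by (auto simp: Units_def)
qed

lemma right_ideal_gen_idem:
  assumes "e \<in> carrier R" "e \<otimes> e = e"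
  shows "right_ideal_gen R e = {x \<in> carrier R. e \<otimes> x = x}"
proof (intro equalityI subsetI)
  fix x assume "x \<in> right_ideal_gen R e"
  then show "x \<in> {x \<in> carrier R. e \<otimes> x = x}"
    using assms by (auto simp: right_ideal_gen_def m_assoc[symmetric])
next
  fix x assume "x \<in> {x \<in> carrier R. e \<otimes> x = x}"
  then have "x \<in> carrier R" "x = e \<otimes> x" by simp_all
  then show "x \<in> right_ideal_gen R e" unfolding right_ideal_gen_def by blast
qed

lemma right_module_iso_idempotentsE:
  assumes e: "e \<in> carrier R" "e \<otimes> e = e" and f: "f \<in> carrier R" "f \<otimes> f = f"
    and iso: "right_module_iso R (right_ideal_gen R e) (right_ideal_gen R f)"
  obtains a b where "a \<in> carrier R" "b \<in> carrier R" "a \<otimes> e = a" "f \<otimes> a = a"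
    "e \<otimes> b = b" "b \<otimes> f = b" "b \<otimes> a = e" "a \<otimes> b = f"
proof -
  let ?eR = "{x \<in> carrier R. e \<otimes> x = x}" and ?fR = "{x \<in> carrier R. f \<otimes> x = x}"
  obtain \<theta> where \<theta>: "bij_betw \<theta> ?eR ?fR"
    and linear: "\<And>x r. x \<in> ?eR \<Longrightarrow> r \<in> carrier R \<Longrightarrow> \<theta> (x \<otimes> r) = \<theta> x \<otimes> r"
    using iso unfolding right_ideal_gen_idem[OF e] right_ideal_gen_idem[OF f]
    by (auto simp: right_module_iso_def)
  have eR_closed: "x \<otimes> r \<in> ?eR" if "x \<in> ?eR" "r \<in> carrier R" for x r
    using that e by (simp add: m_assoc[symmetric])
  have eR: "e \<in> ?eR" using e by simp
  define a where "a = \<theta> e"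
  have a: "a \<in> ?fR" using \<theta> eR by (auto simp: a_def bij_betw_def)
  obtain b where b: "b \<in> ?eR" "\<theta> b = f" using \<theta> f by (force simp: bij_betw_def)
  have ae: "a \<otimes> e = a" using linear[OF eR e(1)] e(2) by (simp add: a_def)
  have "\<theta> (b \<otimes> a) = \<theta> e" using linear[of b a] a b by (simp add: a_def)
  then have ba: "b \<otimes> a = e" using \<theta> eR_closed[of b a] a b eR by (auto simp: bij_betw_def dest: inj_onD)
  have ab: "a \<otimes> b = f" using linear[OF eR, of b] b by (simp add: a_def)
  have "\<theta> (b \<otimes> f) = \<theta> b" using linear[of b f] b f by simp
  then have bf: "b \<otimes> f = b" using \<theta> eR_closed[of b f] b f by (auto simp: bij_betw_def dest: inj_onD)
  show thesis by (rule that) (use a b ae ba ab bf in simp_all)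
qed

end

lemma group_gradedD:
  fixes A (structure)
  assumes "group_graded A G Gr"
  shows "ring A" "group G"
    and "g \<in> carrier G \<Longrightarrow> additive_subgroup (Gr g) A"
    and "g \<in> carrier G \<Longrightarrow> Gr g \<subseteq> carrier A"
    and "g \<in> carrier G \<Longrightarrow> h \<in> carrier G \<Longrightarrow> x \<in> Gr g \<Longrightarrow> y \<in> Gr h \<Longrightarrow>
      x \<otimes> y \<in> Gr (g \<otimes>\<^bsub>G\<^esub> h)"
    and "x \<in> carrier A \<Longrightarrow> \<exists>!f. f \<in> (\<Pi>\<^sub>E g\<in>carrier G. Gr g) \<and>
          finite {g\<in>carrier G. f g \<noteq> \<zero>} \<and> x = finsum A f {g\<in>carrier G. f g \<noteq> \<zero>}"
    and "f \<in> (\<Pi>\<^sub>E g\<in>carrier G. Gr g) \<Longrightarrow> S \<subseteq> carrier G \<Longrightarrow> f \<in> S \<rightarrow> carrier A"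
    and "Gr \<one>\<^bsub>G\<^esub> \<subseteq> carrier A"
proof -
  show "ring A" and G: "group G" using assms by (simp_all add: group_graded_def)
  show sub: "additive_subgroup (Gr g) A" if "g \<in> carrier G" for g
    using assms that by (simp add: group_graded_def)
  then show sub_carrier: "Gr g \<subseteq> carrier A" if "g \<in> carrier G" for g
    using that additive_subgroup.a_subset by blast
  show "Gr \<one>\<^bsub>G\<^esub> \<subseteq> carrier A"
    using sub_carrier group.is_monoid[OF G] monoid.one_closed by blast
  show "f \<in> S \<rightarrow> carrier A" if "f \<in> (\<Pi>\<^sub>E g\<in>carrier G. Gr g)" "S \<subseteq> carrier G"
    using that sub_carrier by blast
  show "x \<otimes> y \<in> Gr (g \<otimes>\<^bsub>G\<^esub> h)"
    if "g \<in> carrier G" "h \<in> carrier G" "x \<in> Gr g" "y \<in> Gr h" for g h x y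
    using assms that by (simp add: group_graded_def)
  show "\<exists>!f. f \<in> (\<Pi>\<^sub>E g\<in>carrier G. Gr g) \<and>
          finite {g\<in>carrier G. f g \<noteq> \<zero>} \<and> x = finsum A f {g\<in>carrier G. f g \<noteq> \<zero>}"
    if "x \<in> carrier A" for x
    using assms that by (simp add: group_graded_def)
qed

lemma group_graded_cong:
  assumes "\<And>g. g \<in> carrier G \<Longrightarrow> Gr g = Gr' g"
  shows "group_graded A G Gr \<longleftrightarrow> group_graded A G Gr'"
proof -
  have "Pi\<^sub>E (carrier G) Gr = Pi\<^sub>E (carrier G) Gr'" using assms by (rule PiE_cong)
  then show ?thesis
    unfolding group_graded_def using assms
    by (intro conj_cong refl) (auto simp: group.is_monoid monoid.m_closed)
qed

lemma graded_decomposition_unique: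
  fixes A (structure)
  assumes gg: "group_graded A G Gr"
    and f: "f \<in> (\<Pi>\<^sub>E g\<in>carrier G. Gr g)" "{g\<in>carrier G. f g \<noteq> \<zero>} \<subseteq> T"
    and f': "f' \<in> (\<Pi>\<^sub>E g\<in>carrier G. Gr g)" "{g\<in>carrier G. f' g \<noteq> \<zero>} \<subseteq> T"
    and T: "finite T" "T \<subseteq> carrier G"
    and sum_eq: "finsum A f T = finsum A f' T"
  shows "f = f'"
proof -
  interpret ring A using group_gradedD(1)[OF gg] .
  have sum_supp: "finsum A h T = finsum A h {g\<in>carrier G. h g \<noteq> \<zero>}"
    if "h \<in> (\<Pi>\<^sub>E g\<in>carrier G. Gr g)" "{g\<in>carrier G. h g \<noteq> \<zero>} \<subseteq> T" for h
    using that T group_gradedD(7)[OF gg]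
    by (intro add.finprod_mono_neutral_cong_right) auto
  define x where "x = finsum A f T"
  define decomposes where "decomposes h \<longleftrightarrow> h \<in> (\<Pi>\<^sub>E g\<in>carrier G. Gr g) \<and>
    finite {g\<in>carrier G. h g \<noteq> \<zero>} \<and> x = finsum A h {g\<in>carrier G. h g \<noteq> \<zero>}" for h
  have "x \<in> carrier A"
    using f T group_gradedD(7)[OF gg] unfolding x_def by (intro finsum_closed) auto
  then have "\<exists>!h. decomposes h"
    unfolding decomposes_def by (rule group_gradedD(6)[OF gg])
  moreover have "decomposes f" "decomposes f'"
    using f f' T sum_supp[OF f] sum_supp[OF f'] sum_eq
    unfolding decomposes_def x_def by (auto intro: finite_subset)
  ultimately show ?thesis by blast
qed

lemma graded_left_mult_decomposition:
  fixes A (structure) and G :: "('g, 'n) monoid_scheme"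
  assumes gg: "group_graded A G Gr" and g: "g \<in> carrier G" and u: "u \<in> Gr g"
    and f: "f \<in> (\<Pi>\<^sub>E h\<in>carrier G. Gr h)" "{h\<in>carrier G. f h \<noteq> \<zero>} \<subseteq> S"
    and S: "finite S" "S \<subseteq> carrier G"
    and F_def: "F = (\<lambda>k\<in>carrier G. u \<otimes> f (inv\<^bsub>G\<^esub> g \<otimes>\<^bsub>G\<^esub> k))"
  shows "F \<in> (\<Pi>\<^sub>E h\<in>carrier G. Gr h)"
    and "{k\<in>carrier G. F k \<noteq> \<zero>} \<subseteq> (\<lambda>h. g \<otimes>\<^bsub>G\<^esub> h) ` S"
    and "finsum A F ((\<lambda>h. g \<otimes>\<^bsub>G\<^esub> h) ` S) = u \<otimes> finsum A f S"
proof -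
  interpret ring A using group_gradedD(1)[OF gg] .
  interpret G: group G using group_gradedD(2)[OF gg] .
  have uc: "u \<in> carrier A" using u g group_gradedD(4)[OF gg] by blast
  have fc: "f \<in> T \<rightarrow> carrier A" if "T \<subseteq> carrier G" for T
    using group_gradedD(7)[OF gg f(1) that] .
  have F_shift: "F (g \<otimes>\<^bsub>G\<^esub> h) = u \<otimes> f h" if "h \<in> carrier G" for h
    using that g by (simp add: F_def G.m_assoc[symmetric])
  show F: "F \<in> (\<Pi>\<^sub>E h\<in>carrier G. Gr h)"
  proof
    fix k assume k: "k \<in> carrier G"
    have "u \<otimes> f (inv\<^bsub>G\<^esub> g \<otimes>\<^bsub>G\<^esub> k) \<in> Gr (g \<otimes>\<^bsub>G\<^esub> (inv\<^bsub>G\<^esub> g \<otimes>\<^bsub>G\<^esub> k))"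
      using group_gradedD(5)[OF gg g _ u] f(1) k g by blast
    then show "F k \<in> Gr k" using k g by (simp add: F_def G.m_assoc[symmetric])
  qed (simp add: F_def)
  show "{k\<in>carrier G. F k \<noteq> \<zero>} \<subseteq> (\<lambda>h. g \<otimes>\<^bsub>G\<^esub> h) ` S"
  proof clarify
    fix k assume k: "k \<in> carrier G" "F k \<noteq> \<zero>"
    then have "inv\<^bsub>G\<^esub> g \<otimes>\<^bsub>G\<^esub> k \<in> S"
      using f(2) fc[of "{inv\<^bsub>G\<^esub> g \<otimes>\<^bsub>G\<^esub> k}"] g uc by (auto simp: F_def)
    moreover have "k = g \<otimes>\<^bsub>G\<^esub> (inv\<^bsub>G\<^esub> g \<otimes>\<^bsub>G\<^esub> k)" using k g by (simp add: G.m_assoc[symmetric])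
    ultimately show "k \<in> (\<lambda>h. g \<otimes>\<^bsub>G\<^esub> h) ` S" by blast
  qed
  have "inj_on (\<lambda>h. g \<otimes>\<^bsub>G\<^esub> h) S" using S(2) g G.l_cancel by (intro inj_onI) blast
  moreover have "F \<in> (\<lambda>h. g \<otimes>\<^bsub>G\<^esub> h) ` S \<rightarrow> carrier A"
    using group_gradedD(7)[OF gg F] S(2) g by auto
  ultimately have "finsum A F ((\<lambda>h. g \<otimes>\<^bsub>G\<^esub> h) ` S) = finsum A (\<lambda>h. u \<otimes> f h) S"
    using S F_shift fc[OF S(2)] uc by (subst add.finprod_reindex) (auto intro!: add.finprod_cong')
  also have "\<dots> = u \<otimes> finsum A f S" using S fc[OF S(2)] uc by (simp add: finsum_rdistr)
  finally show "finsum A F ((\<lambda>h. g \<otimes>\<^bsub>G\<^esub> h) ` S) = u \<otimes> finsum A f S" .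
qed

lemma graded_Units_inv_mem:
  fixes A (structure) and G :: "('g, 'n) monoid_scheme"
  assumes gg: "group_graded A G Gr" and one: "\<one> \<in> Gr \<one>\<^bsub>G\<^esub>"
    and g: "g \<in> carrier G" and u: "u \<in> Gr g" "u \<in> Units A"
  shows "inv u \<in> Gr (inv\<^bsub>G\<^esub> g)"
proof -
  interpret ring A using group_gradedD(1)[OF gg] .
  interpret G: group G using group_gradedD(2)[OF gg] .
  let ?g' = "inv\<^bsub>G\<^esub> g"
  have uc: "u \<in> carrier A" "inv u \<in> carrier A" and g': "?g' \<in> carrier G"
    using u g by (auto simp: Units_closed)
  obtain f where f: "f \<in> (\<Pi>\<^sub>E g\<in>carrier G. Gr g)" "finite {h\<in>carrier G. f h \<noteq> \<zero>}"
    "inv u = finsum A f {h\<in>carrier G. f h \<noteq> \<zero>}"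
    using group_gradedD(6)[OF gg uc(2)] by auto
  have fc: "f \<in> T \<rightarrow> carrier A" if "T \<subseteq> carrier G" for T
    using group_gradedD(7)[OF gg f(1) that] .
  define S where "S = insert ?g' {h\<in>carrier G. f h \<noteq> \<zero>}"
  have S: "finite S" "S \<subseteq> carrier G" using f(2) g' by (auto simp: S_def)
  have inv_u_sum: "inv u = finsum A f S"
    unfolding f(3) using S fc[OF S(2)]
    by (intro add.finprod_mono_neutral_cong_left) (auto simp: S_def)
  (* Comparing the homogeneous components of u (inv u) with those of 1 shows that inv u
     is concentrated in degree inv g. *)
  define F where "F = (\<lambda>k\<in>carrier G. u \<otimes> f (?g' \<otimes>\<^bsub>G\<^esub> k))"
  define \<delta> where "\<delta> = (\<lambda>k\<in>carrier G. if k = \<one>\<^bsub>G\<^esub> then \<one> else \<zero>)"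
  define T where "T = (\<lambda>h. g \<otimes>\<^bsub>G\<^esub> h) ` S"
  have T: "finite T" "T \<subseteq> carrier G" "\<one>\<^bsub>G\<^esub> \<in> T"
    using S g by (auto simp: T_def S_def intro!: image_eqI[where x = ?g'])
  have "{h\<in>carrier G. f h \<noteq> \<zero>} \<subseteq> S" by (auto simp: S_def)
  note F = graded_left_mult_decomposition[OF gg g u(1) f(1) this S F_def, folded T_def]
  have \<delta>: "\<delta> \<in> (\<Pi>\<^sub>E g\<in>carrier G. Gr g)"
    using one additive_subgroup.zero_closed[OF group_gradedD(3)[OF gg]] by (auto simp: \<delta>_def)
  have \<delta>_supp: "{k\<in>carrier G. \<delta> k \<noteq> \<zero>} \<subseteq> T" using T(3) by (auto simp: \<delta>_def)
  have "finsum A F T = \<one>" using F(3) inv_u_sum[symmetric] u by simp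
  also have "\<dots> = finsum A (\<lambda>k. if \<one>\<^bsub>G\<^esub> = k then \<one> else \<zero>) T"
    using T by (intro add.finprod_singleton[where f = "\<lambda>_. \<one>", simplified, symmetric]) auto
  also have "\<dots> = finsum A \<delta> T"
    using T by (intro add.finprod_cong') (auto simp: \<delta>_def)
  finally have "F = \<delta>"
    by (rule graded_decomposition_unique[OF gg F(1,2) \<delta> \<delta>_supp T(1,2)])
  have f_vanishes: "f h = \<zero>" if h: "h \<in> carrier G" "h \<noteq> ?g'" for h
  proof -
    have "g \<otimes>\<^bsub>G\<^esub> h \<noteq> \<one>\<^bsub>G\<^esub>" using h g G.inv_equality G.inv_comm by blast
    have "u \<otimes> f h = F (g \<otimes>\<^bsub>G\<^esub> h)" using h g by (simp add: F_def G.m_assoc[symmetric])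
    also have "\<dots> = \<zero>" using \<open>F = \<delta>\<close> \<open>g \<otimes>\<^bsub>G\<^esub> h \<noteq> \<one>\<^bsub>G\<^esub>\<close> h g by (simp add: \<delta>_def)
    finally have "inv u \<otimes> (u \<otimes> f h) = \<zero>" using uc by simp
    then show ?thesis using u uc fc[of "{h}"] h by (simp add: m_assoc[symmetric])
  qed
  have "inv u = finsum A f {?g'}"
    unfolding inv_u_sum using S fc[OF S(2)] f_vanishes
    by (intro add.finprod_mono_neutral_cong_right) (auto simp: S_def)
  then show ?thesis using f(1) g' fc[of "{?g'}"] by auto
qed

lemma group_graded_corner_component:
  fixes A (structure)
  assumes gg: "group_graded A G Gr" and e: "e \<in> Gr \<one>\<^bsub>G\<^esub>" "e \<otimes> e = e"
    and g: "g \<in> carrier G"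
  shows "(\<lambda>x. e \<otimes> x \<otimes> e) ` Gr g = Gr g \<inter> carrier (corner A e)"
proof -
  interpret ring A using group_gradedD(1)[OF gg] .
  interpret G: group G using group_gradedD(2)[OF gg] .
  have ec: "e \<in> carrier A" using e(1) group_gradedD(8)[OF gg] by blast
  have "e \<otimes> x \<otimes> e \<in> Gr g" if "x \<in> Gr g" for x
    using group_gradedD(5)[OF gg _ g e(1) that] group_gradedD(5)[OF gg _ _ _ e(1), of g] g
    by simp
  moreover have "x = e \<otimes> x \<otimes> e" if "x \<in> carrier (corner A e)" for x
    using that ec e(2) by (simp add: carrier_corner m_assoc)
  moreover have "e \<otimes> x \<otimes> e \<in> carrier (corner A e)" if "x \<in> Gr g" for x
    using that group_gradedD(4)[OF gg g] by (auto simp: corner_def)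
  ultimately show ?thesis
    by (intro equalityI subsetI) auto
qed

lemma graded_decomposition_corner:
  fixes A (structure)
  assumes gg: "group_graded A G Gr" and e: "e \<in> Gr \<one>\<^bsub>G\<^esub>" "e \<otimes> e = e"
    and x: "x \<in> carrier (corner A e)"
  shows "\<exists>!f. f \<in> (\<Pi>\<^sub>E g\<in>carrier G. Gr g \<inter> carrier (corner A e)) \<and>
    finite {g \<in> carrier G. f g \<noteq> \<zero>} \<and> x = finsum (corner A e) f {g \<in> carrier G. f g \<noteq> \<zero>}"
proof -
  interpret ring A using group_gradedD(1)[OF gg] .
  have ec: "e \<in> carrier A" using e(1) group_gradedD(8)[OF gg] by blast
  define decomposes where "decomposes B H f \<longleftrightarrow> f \<in> (\<Pi>\<^sub>E g\<in>carrier G. H g) \<and>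
      finite {g \<in> carrier G. f g \<noteq> \<zero>} \<and> x = finsum B f {g \<in> carrier G. f g \<noteq> \<zero>}"
    for B :: "('a, 'b) ring_scheme" and H f
  let ?Gr' = "\<lambda>g. Gr g \<inter> carrier (corner A e)"
  have corner_to_A: "decomposes A Gr f" if "decomposes (corner A e) ?Gr' f" for f
  proof -
    have "f \<in> {g \<in> carrier G. f g \<noteq> \<zero>} \<rightarrow> carrier (corner A e)"
      using that by (auto simp: decomposes_def PiE_iff)
    from finsum_corner[OF ec e(2) this] show ?thesis
      using that unfolding decomposes_def by (auto simp: PiE_iff)
  qed
  have x_eq: "x \<in> carrier A" "e \<otimes> x \<otimes> e = x" using x ec e(2) by (simp_all add: carrier_corner m_assoc)
  then obtain f where f: "decomposes A Gr f"
    using group_gradedD(6)[OF gg] unfolding decomposes_def by blast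
  define S where "S = {g \<in> carrier G. f g \<noteq> \<zero>}"
  have fc: "f \<in> S \<rightarrow> carrier A" using f group_gradedD(7)[OF gg] by (auto simp: decomposes_def S_def)
  define F where "F = (\<lambda>g\<in>carrier G. e \<otimes> f g \<otimes> e)"
  have F: "F \<in> (\<Pi>\<^sub>E g\<in>carrier G. ?Gr' g)"
    using f group_graded_corner_component[OF gg e] by (auto simp: F_def decomposes_def)
  have F_supp: "{g \<in> carrier G. F g \<noteq> \<zero>} \<subseteq> S"
    using fc ec by (auto simp: F_def S_def)
  have "finsum (corner A e) F {g \<in> carrier G. F g \<noteq> \<zero>} =
      finsum A F {g \<in> carrier G. F g \<noteq> \<zero>}"
    using F by (intro finsum_corner[OF ec e(2)]) (auto simp: PiE_iff)
  also have "\<dots> = finsum A (\<lambda>g. e \<otimes> f g \<otimes> e) S"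
    using f F_supp fc ec
    by (intro add.finprod_mono_neutral_cong_left) (auto simp: F_def S_def decomposes_def)
  also have "\<dots> = finsum A (\<lambda>g. e \<otimes> f g) S \<otimes> e"
    using f fc ec by (intro finsum_ldistr[symmetric]) (auto simp: S_def decomposes_def)
  also have "\<dots> = e \<otimes> finsum A f S \<otimes> e"
    using f fc ec by (subst finsum_rdistr) (auto simp: S_def decomposes_def)
  also have "\<dots> = x"
    using f x_eq by (simp add: S_def decomposes_def)
  finally have "decomposes (corner A e) ?Gr' F"
    using F F_supp f unfolding decomposes_def S_def by (auto intro: finite_subset)
  moreover have "\<exists>!f. decomposes A Gr f"
    using group_gradedD(6)[OF gg x_eq(1)] unfolding decomposes_def .
  ultimately have "\<exists>!f. decomposes (corner A e) ?Gr' f"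
    using corner_to_A by blast
  then show ?thesis by (simp add: decomposes_def)
qed

lemma group_graded_corner:
  fixes A (structure)
  assumes gg: "group_graded A G Gr" and e: "e \<in> Gr \<one>\<^bsub>G\<^esub>" "e \<otimes> e = e"
  shows "group_graded (corner A e) G (\<lambda>g. (\<lambda>x. e \<otimes> x \<otimes> e) ` Gr g)"
proof -
  interpret ring A using group_gradedD(1)[OF gg] .
  have ec: "e \<in> carrier A" using e(1) group_gradedD(8)[OF gg] by blast
  interpret C: ring "corner A e" using ring_corner[OF ec e(2)] .
  let ?Gr' = "\<lambda>g. Gr g \<inter> carrier (corner A e)"
  have "group_graded (corner A e) G ?Gr'"
    unfolding group_graded_def
  proof (intro conjI ballI)
    fix g assume g: "g \<in> carrier G"
    note sub = group_gradedD(3)[OF gg g]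
    show "additive_subgroup (?Gr' g) (corner A e)"
    proof (intro additive_subgroupI C.add.subgroupI)
      show "?Gr' g \<noteq> {}" using additive_subgroup.zero_closed[OF sub] C.zero_closed by auto
      show "\<ominus>\<^bsub>corner A e\<^esub> x \<in> ?Gr' g" if "x \<in> ?Gr' g" for x
        using that additive_subgroup.a_inv_closed[OF sub] C.a_inv_closed[of x]
        by (simp add: a_inv_corner[OF ec e(2)])
      show "x \<oplus>\<^bsub>corner A e\<^esub> y \<in> ?Gr' g" if "x \<in> ?Gr' g" "y \<in> ?Gr' g" for x y
        using that additive_subgroup.a_closed[OF sub] C.a_closed[of x y] by auto
    qed auto
  next
    fix g h x y assume "g \<in> carrier G" "h \<in> carrier G" "x \<in> ?Gr' g" "y \<in> ?Gr' h"
    then show "x \<otimes>\<^bsub>corner A e\<^esub> y \<in> ?Gr' (g \<otimes>\<^bsub>G\<^esub> h)"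
      using group_gradedD(5)[OF gg] C.m_closed[of x y] by auto
  qed (simp_all add: C.ring_axioms group_gradedD(2)[OF gg] graded_decomposition_corner[OF gg e])
  then show ?thesis
    by (rule group_graded_cong[THEN iffD1, rotated]) (simp add: group_graded_corner_component[OF gg e])
qed

lemma conjugation_O_automorphism:
  fixes A (structure)
  assumes A: "ring A" and alg: "algebra_over \<O> (A\<lparr>carrier := S\<rparr>) \<phi>" and S: "S \<subseteq> carrier A"
    and u: "u \<in> Units A"
    and conj_closed: "\<And>x. x \<in> S \<Longrightarrow> u \<otimes> x \<otimes> inv u \<in> S" "\<And>x. x \<in> S \<Longrightarrow> inv u \<otimes> x \<otimes> u \<in> S"
    and commute: "\<And>c. c \<in> carrier \<O> \<Longrightarrow> \<phi> c \<otimes> u = u \<otimes> \<phi> c"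
  shows "(\<lambda>x. u \<otimes> x \<otimes> inv u) \<in> O_automorphisms \<O> (A\<lparr>carrier := S\<rparr>) \<phi>"
proof -
  interpret ring A by fact
  let ?L = "A\<lparr>carrier := S\<rparr>"
  have uc: "u \<in> carrier A" "inv u \<in> carrier A" using u by (simp_all add: Units_closed)
  have cancel_l: "u \<otimes> (inv u \<otimes> x) = x" if "x \<in> carrier A" for x
    using that u uc by (simp add: m_assoc[symmetric])
  have cancel_r: "inv u \<otimes> (u \<otimes> x) = x" if "x \<in> carrier A" for x
    using that u uc by (simp add: m_assoc[symmetric])
  have xS: "x \<in> carrier A" if "x \<in> S" for x using that S by blast
  have hom: "(\<lambda>x. u \<otimes> x \<otimes> inv u) \<in> ring_hom ?L ?L"
  proof (rule ring_hom_memI)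
    fix x y assume "x \<in> carrier ?L" "y \<in> carrier ?L"
    then have x: "x \<in> carrier A" and y: "y \<in> carrier A" using xS by simp_all
    show "u \<otimes> (x \<otimes>\<^bsub>?L\<^esub> y) \<otimes> inv u = u \<otimes> x \<otimes> inv u \<otimes>\<^bsub>?L\<^esub> (u \<otimes> y \<otimes> inv u)"
      using x y uc by (simp add: m_assoc cancel_r)
    show "u \<otimes> (x \<oplus>\<^bsub>?L\<^esub> y) \<otimes> inv u = u \<otimes> x \<otimes> inv u \<oplus>\<^bsub>?L\<^esub> u \<otimes> y \<otimes> inv u"
      using x y uc by (simp add: l_distr r_distr)
  qed (use conj_closed u uc in simp_all)
  have "bij_betw (\<lambda>x. u \<otimes> x \<otimes> inv u) S S"
    by (rule bij_betwI[where g = "\<lambda>x. inv u \<otimes> x \<otimes> u"])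
      (use conj_closed xS u uc in \<open>auto simp: m_assoc cancel_l cancel_r\<close>)
  moreover have "u \<otimes> (\<phi> c \<otimes> x) \<otimes> inv u = \<phi> c \<otimes> (u \<otimes> x \<otimes> inv u)"
    if c: "c \<in> carrier \<O>" and x: "x \<in> S" for c x
  proof -
    have "\<phi> c \<in> carrier A"
      using alg c xS ring_hom_closed by (fastforce simp: algebra_over_def)
    then show ?thesis using commute[OF c] xS[OF x] uc by (simp add: m_assoc[symmetric])
  qed
  ultimately show ?thesis using hom by (simp add: O_automorphisms_def ring_iso_def)
qed

lemma algebra_over_corner:
  fixes L (structure)
  assumes alg: "algebra_over \<O> L \<phi>" and e: "e \<in> carrier L" "e \<otimes> e = e"
  shows "algebra_over \<O> (corner L e) (\<lambda>c. \<phi> c \<otimes> e)"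
proof -
  interpret ring L using alg by (simp add: algebra_over_def)
  have \<phi>: "\<phi> \<in> ring_hom \<O> L"
    and central: "\<And>c x. c \<in> carrier \<O> \<Longrightarrow> x \<in> carrier L \<Longrightarrow> \<phi> c \<otimes> x = x \<otimes> \<phi> c"
    using alg by (simp_all add: algebra_over_def)
  have \<phi>c: "\<phi> c \<in> carrier L" if "c \<in> carrier \<O>" for c using ring_hom_closed[OF \<phi> that] .
  have "(\<lambda>c. \<phi> c \<otimes> e) \<in> ring_hom \<O> (corner L e)"
  proof (rule ring_hom_memI)
    fix c assume c: "c \<in> carrier \<O>"
    have "e \<otimes> (\<phi> c \<otimes> e) = \<phi> c \<otimes> e \<otimes> e"
      using \<phi>c[OF c] e(1) central[OF c e(1), symmetric] by (simp flip: m_assoc)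
    then show "\<phi> c \<otimes> e \<in> carrier (corner L e)"
      using \<phi>c[OF c] e by (simp add: carrier_corner m_assoc)
  next
    fix c d assume c: "c \<in> carrier \<O>" and d: "d \<in> carrier \<O>"
    have "\<phi> c \<otimes> e \<otimes> (\<phi> d \<otimes> e) = \<phi> c \<otimes> (e \<otimes> \<phi> d) \<otimes> e"
      using \<phi>c[OF c] \<phi>c[OF d] e(1) by (simp add: m_assoc)
    also have "\<dots> = \<phi> c \<otimes> \<phi> d \<otimes> (e \<otimes> e)"
      using \<phi>c[OF c] \<phi>c[OF d] e(1)
      by (simp only: central[OF d e(1), symmetric]) (simp add: m_assoc)
    finally have "\<phi> c \<otimes> e \<otimes> (\<phi> d \<otimes> e) = \<phi> c \<otimes> \<phi> d \<otimes> e" using e(2) by simp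
    then show "\<phi> (c \<otimes>\<^bsub>\<O>\<^esub> d) \<otimes> e = \<phi> c \<otimes> e \<otimes>\<^bsub>corner L e\<^esub> (\<phi> d \<otimes> e)"
      using ring_hom_mult[OF \<phi> c d] by simp
  next
    fix c d assume c: "c \<in> carrier \<O>" and d: "d \<in> carrier \<O>"
    show "\<phi> (c \<oplus>\<^bsub>\<O>\<^esub> d) \<otimes> e = \<phi> c \<otimes> e \<oplus>\<^bsub>corner L e\<^esub> \<phi> d \<otimes> e"
      using ring_hom_add[OF \<phi> c d] \<phi>c[OF c] \<phi>c[OF d] e(1) by (simp add: l_distr)
  next
    show "\<phi> \<one>\<^bsub>\<O>\<^esub> \<otimes> e = \<one>\<^bsub>corner L e\<^esub>" using ring_hom_one[OF \<phi>] e(1) by simp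
  qed
  moreover have "(\<phi> c \<otimes> e) \<otimes>\<^bsub>corner L e\<^esub> x = x \<otimes>\<^bsub>corner L e\<^esub> (\<phi> c \<otimes> e)"
    if "c \<in> carrier \<O>" "x \<in> carrier (corner L e)" for c x
    using corner_central[OF e \<phi>c central[OF that(1)] that(2)] that(1) by simp
  ultimately show ?thesis using ring_corner[OF e] by (simp add: algebra_over_def)
qed

lemma homogeneous_conjugation_O_automorphism:
  fixes \<Gamma> (structure) and G :: "('g, 'n) monoid_scheme"
  assumes lcp: "linear_crossed_product \<O> \<phi> \<Gamma> (\<Gamma>\<lparr>carrier := Gr \<one>\<^bsub>G\<^esub>\<rparr>) G Gr"
    and g: "g \<in> carrier G" and u: "u \<in> Gr g" "u \<in> Units \<Gamma>"
  shows "(\<lambda>x. u \<otimes> x \<otimes> inv u) \<in> O_automorphisms \<O> (\<Gamma>\<lparr>carrier := Gr \<one>\<^bsub>G\<^esub>\<rparr>) \<phi>"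
proof -
  have gg: "group_graded \<Gamma> G Gr" and alg: "algebra_over \<O> (\<Gamma>\<lparr>carrier := Gr \<one>\<^bsub>G\<^esub>\<rparr>) \<phi>"
    using lcp by (simp_all add: linear_crossed_product_def crossed_product_def)
  have central: "\<phi> c \<otimes> u = u \<otimes> \<phi> c" if "c \<in> carrier \<O>" for c
    using lcp that u(2) by (simp add: linear_crossed_product_def Units_def)
  interpret ring \<Gamma> using group_gradedD(1)[OF gg] .
  interpret G: group G using group_gradedD(2)[OF gg] .
  interpret L: ring "\<Gamma>\<lparr>carrier := Gr \<one>\<^bsub>G\<^esub>\<rparr>" using alg by (simp add: algebra_over_def)
  have u': "inv u \<in> Gr (inv\<^bsub>G\<^esub> g)"
    using graded_Units_inv_mem[OF gg _ g u] L.one_closed by simp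
  have conj_mem: "v \<otimes> x \<otimes> w \<in> Gr \<one>\<^bsub>G\<^esub>"
    if "h \<in> carrier G" "v \<in> Gr h" "w \<in> Gr (inv\<^bsub>G\<^esub> h)" "x \<in> Gr \<one>\<^bsub>G\<^esub>" for h v w x
    using group_gradedD(5)[OF gg _ _ group_gradedD(5)[OF gg that(1) _ that(2,4)] that(3)] that(1)
    by simp
  show ?thesis
    using conj_mem[OF g u(1) u'] conj_mem[of "inv\<^bsub>G\<^esub> g" "inv u" u] u u' g central
    by (intro conjugation_O_automorphism[OF ring_axioms alg group_gradedD(8)[OF gg] u(2)]) simp_all
qed

lemma corner_component_meets_Units:
  fixes \<Gamma> (structure) and G :: "('g, 'n) monoid_scheme"
  assumes lcp: "linear_crossed_product \<O> \<phi> \<Gamma> (\<Gamma>\<lparr>carrier := Gr \<one>\<^bsub>G\<^esub>\<rparr>) G Gr"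
    and e: "e \<in> Gr \<one>\<^bsub>G\<^esub>" "e \<otimes> e = e"
    and transfer: "\<forall>\<alpha>\<in>O_automorphisms \<O> (\<Gamma>\<lparr>carrier := Gr \<one>\<^bsub>G\<^esub>\<rparr>) \<phi>.
           right_module_iso (\<Gamma>\<lparr>carrier := Gr \<one>\<^bsub>G\<^esub>\<rparr>)
             (right_ideal_gen (\<Gamma>\<lparr>carrier := Gr \<one>\<^bsub>G\<^esub>\<rparr>) e)
             (right_ideal_gen (\<Gamma>\<lparr>carrier := Gr \<one>\<^bsub>G\<^esub>\<rparr>) (\<alpha> e))"
    and g: "g \<in> carrier G"
  shows "(\<lambda>x. e \<otimes> x \<otimes> e) ` Gr g \<inter> Units (corner \<Gamma> e) \<noteq> {}"
proof -
  let ?L = "\<Gamma>\<lparr>carrier := Gr \<one>\<^bsub>G\<^esub>\<rparr>"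
  have gg: "group_graded \<Gamma> G Gr" and units: "Gr g \<inter> Units \<Gamma> \<noteq> {}"
    and alg: "algebra_over \<O> ?L \<phi>"
    using lcp g by (auto simp: linear_crossed_product_def crossed_product_def)
  interpret ring \<Gamma> using group_gradedD(1)[OF gg] .
  interpret G: group G using group_gradedD(2)[OF gg] .
  interpret L: ring ?L using alg by (simp add: algebra_over_def)
  have Gr1: "Gr \<one>\<^bsub>G\<^esub> \<subseteq> carrier \<Gamma>" by (rule group_gradedD(8)[OF gg])
  have ec: "e \<in> carrier \<Gamma>" using e(1) Gr1 by blast
  obtain u where u: "u \<in> Gr g" "u \<in> Units \<Gamma>" using units by blast
  note \<alpha> = homogeneous_conjugation_O_automorphism[OF lcp g u]
  then have hom: "(\<lambda>x. u \<otimes> x \<otimes> inv u) \<in> ring_hom ?L ?L"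
    by (simp add: O_automorphisms_def ring_iso_def)
  have f: "u \<otimes> e \<otimes> inv u \<in> Gr \<one>\<^bsub>G\<^esub>" "u \<otimes> e \<otimes> inv u \<otimes> (u \<otimes> e \<otimes> inv u) = u \<otimes> e \<otimes> inv u"
    using ring_hom_closed[OF hom, of e] ring_hom_mult[OF hom, of e e] e by simp_all
  have "right_module_iso ?L (right_ideal_gen ?L e) (right_ideal_gen ?L (u \<otimes> e \<otimes> inv u))"
    using bspec[OF transfer \<alpha>] by simp
  then obtain a b where ab: "a \<in> Gr \<one>\<^bsub>G\<^esub>" "b \<in> Gr \<one>\<^bsub>G\<^esub>" "a \<otimes> e = a"
    "u \<otimes> e \<otimes> inv u \<otimes> a = a" "e \<otimes> b = b" "b \<otimes> (u \<otimes> e \<otimes> inv u) = b"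
    "b \<otimes> a = e" "a \<otimes> b = u \<otimes> e \<otimes> inv u"
    using L.right_module_iso_idempotentsE[of e "u \<otimes> e \<otimes> inv u"] e f by auto
  have bu: "b \<otimes> u \<in> Units (corner \<Gamma> e)"
    using ab Gr1 by (intro corner_Units_of_conjugate_idempotent[OF ec e(2) u(2) refl]) auto
  then have "b \<otimes> u \<in> carrier (corner \<Gamma> e)" by (simp add: Units_def)
  moreover have "b \<otimes> u \<in> Gr g"
    using group_gradedD(5)[OF gg _ g ab(2) u(1)] g by simp
  ultimately show ?thesis
    using bu group_graded_corner_component[OF gg e g] by blast
qed

theorem proposition4p15:
  fixes \<O> :: "('o, 'p) ring_scheme" and p :: nat
    and \<Gamma> :: "('a, 'm) ring_scheme" and G :: "('g, 'n) monoid_scheme"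
    and Gr :: "'g \<Rightarrow> 'a set" and \<phi> :: "'o \<Rightarrow> 'a" and e :: 'a
  assumes "complete_DVR \<O>" and "char_zero_ring \<O>" and "residue_char \<O> p"
    and "O_order \<O> (\<Gamma>\<lparr>carrier := Gr \<one>\<^bsub>G\<^esub>\<rparr>) \<phi>"
    and "finite (carrier G)"
    and "linear_crossed_product \<O> \<phi> \<Gamma> (\<Gamma>\<lparr>carrier := Gr \<one>\<^bsub>G\<^esub>\<rparr>) G Gr"
    and "e \<in> Gr \<one>\<^bsub>G\<^esub>" and "e \<otimes>\<^bsub>\<Gamma>\<^esub> e = e"
    and "\<forall>\<alpha>\<in>O_automorphisms \<O> (\<Gamma>\<lparr>carrier := Gr \<one>\<^bsub>G\<^esub>\<rparr>) \<phi>.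
           right_module_iso (\<Gamma>\<lparr>carrier := Gr \<one>\<^bsub>G\<^esub>\<rparr>)
             (right_ideal_gen (\<Gamma>\<lparr>carrier := Gr \<one>\<^bsub>G\<^esub>\<rparr>) e)
             (right_ideal_gen (\<Gamma>\<lparr>carrier := Gr \<one>\<^bsub>G\<^esub>\<rparr>) (\<alpha> e))"
  shows "linear_crossed_product \<O> (\<lambda>c. \<phi> c \<otimes>\<^bsub>\<Gamma>\<^esub> e)
           (corner \<Gamma> e) (corner (\<Gamma>\<lparr>carrier := Gr \<one>\<^bsub>G\<^esub>\<rparr>) e) G
           (\<lambda>g. (\<lambda>x. e \<otimes>\<^bsub>\<Gamma>\<^esub> x \<otimes>\<^bsub>\<Gamma>\<^esub> e) ` Gr g)"
proof -
  let ?L = "\<Gamma>\<lparr>carrier := Gr \<one>\<^bsub>G\<^esub>\<rparr>"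
  let ?C = "corner \<Gamma> e"
  have gg: "group_graded \<Gamma> G Gr" and alg: "algebra_over \<O> ?L \<phi>"
    and central: "\<And>c x. c \<in> carrier \<O> \<Longrightarrow> x \<in> carrier \<Gamma> \<Longrightarrow> \<phi> c \<otimes>\<^bsub>\<Gamma>\<^esub> x = x \<otimes>\<^bsub>\<Gamma>\<^esub> \<phi> c"
    using assms(6) by (simp_all add: linear_crossed_product_def crossed_product_def)
  interpret ring \<Gamma> using group_gradedD(1)[OF gg] .
  have ec: "e \<in> carrier \<Gamma>" using assms(7) group_gradedD(8)[OF gg] by blast
  have \<phi>: "\<phi> c \<in> carrier \<Gamma>" if "c \<in> carrier \<O>" for c
    using alg that ring_hom_closed group_gradedD(8)[OF gg] by (fastforce simp: algebra_over_def)
  have "crossed_product ?C (corner ?L e) G (\<lambda>g. (\<lambda>x. e \<otimes>\<^bsub>\<Gamma>\<^esub> x \<otimes>\<^bsub>\<Gamma>\<^esub> e) ` Gr g)"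
    unfolding crossed_product_def
    using group_graded_corner[OF gg assms(7,8)] corner_component_meets_Units[OF assms(6-9)]
    by (simp add: corner_def)
  moreover have "algebra_over \<O> (corner ?L e) (\<lambda>c. \<phi> c \<otimes>\<^bsub>\<Gamma>\<^esub> e)"
    using algebra_over_corner[OF alg, of e] assms(7,8) by simp
  moreover have "(\<phi> c \<otimes>\<^bsub>\<Gamma>\<^esub> e) \<otimes>\<^bsub>?C\<^esub> x = x \<otimes>\<^bsub>?C\<^esub> (\<phi> c \<otimes>\<^bsub>\<Gamma>\<^esub> e)"
    if "c \<in> carrier \<O>" "x \<in> carrier ?C" for c x
    using corner_central[OF ec assms(8) \<phi> central] that by simp
  ultimately show ?thesis by (simp add: linear_crossed_product_def)
qed

end
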